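(* Let $n\geq 2$. Then $T\cap S_{n-1}=\{\mathrm{id}\}$, and for every $2\leq i\leq n$, $$T\cap \big(S_{n-1}(1,i)\big)=\{C_{m_1}\cdots C_{m_{i-1}}\ |\ 2\leq m_1<\dots<m_{i-1}\leq n\}.$$
   Context: Permutations in $S_n$ are composed right-to-left: $(\sigma\tau)(k)=\sigma(\tau(k))$. $S_{n-1}\subset S_n$ denotes the subgroup of permutations $\tau$ with $\tau(1)=1$, and $S_{n-1}(1,i)=\{\tau\cdot(1,i):\tau\in S_{n-1}\}$, where $(1,i)$ is a transposition. For $m\geq 2$, $C_m$ denotes the cyclic permutation $(1,m,m-1,\dots,2)$ (i.e. $1\mapsto m\mapsto m-1\mapsto\dots\mapsto 2\mapsto 1$). $T\subset S_n$ is defined as $T:=\{\mathrm{id}\}\cup\bigcup_{i=1}^{n-1}\{C_{m_1}\cdots C_{m_i}\ |\ 2\leq m_1<\dots<m_i\leq n\}$. *)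

theory Defs
  imports "HOL-Combinatorics.Combinatorics"
begin

text \<open>Permutations of S_n are functions nat => nat that permute {1..n}
  (identity outside). Composition is right-to-left: (s o t) k = s (t k).\<close>

definition Cyc :: "nat \<Rightarrow> nat \<Rightarrow> nat" where
  "Cyc m = (\<lambda>k. if k = 1 then m else if 2 \<le> k \<and> k \<le> m then k - 1 else k)"

definition cyc_prod :: "nat list \<Rightarrow> nat \<Rightarrow> nat" where
  "cyc_prod ms = foldr (\<circ>) (map Cyc ms) id"

definition cyc_prods :: "nat \<Rightarrow> nat \<Rightarrow> (nat \<Rightarrow> nat) set" where
  "cyc_prods n i = {cyc_prod ms | ms. length ms = i \<and> sorted_wrt (<) ms \<and> set ms \<subseteq> {2..n}}"

definition Tset :: "nat \<Rightarrow> (nat \<Rightarrow> nat) set" where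
  "Tset n = {id} \<union> (\<Union>i\<in>{1..n-1}. cyc_prods n i)"

definition Ssub :: "nat \<Rightarrow> (nat \<Rightarrow> nat) set" where
  "Ssub n = {\<tau>. \<tau> permutes {1..n} \<and> \<tau> 1 = 1}"

definition Scoset :: "nat \<Rightarrow> nat \<Rightarrow> (nat \<Rightarrow> nat) set" where
  "Scoset n i = {\<tau> \<circ> Transposition.transpose 1 i | \<tau>. \<tau> \<in> Ssub n}"

end

theory Submission
  imports Defs
begin

text \<open>Reading a product \<open>C\<^bsub>m\<^sub>1\<^esub> \<cdots> C\<^bsub>m\<^sub>j\<^esub>\<close> with \<open>2 \<le> m\<^sub>1 < \<dots> < m\<^sub>j\<close> from the
  right, the \<open>k\<close>-th factor from the right satisfies \<open>m \<ge> j - k + 2\<close> and so lowers the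
  current value by one; hence the product sends \<open>j + 1\<close> to \<open>1\<close>. Since permutations are
  injective, the preimage of \<open>1\<close> determines the number \<open>j\<close> of factors, while the coset
  \<open>S\<^sub>n\<^sub>-\<^sub>1(1,i)\<close> consists exactly of the permutations sending \<open>i\<close> to \<open>1\<close>.\<close>

lemma Cyc_permutes:
  assumes "1 \<le> m"
  shows "Cyc m permutes {1..m}"
proof (rule bij_imp_permutes)
  show "bij_betw (Cyc m) {1..m} {1..m}"
    by (rule bij_betw_byWitness[where f' = "\<lambda>k. if k = m then 1 else k + 1"])
       (use assms in \<open>auto simp: Cyc_def\<close>)
  show "x \<notin> {1..m} \<Longrightarrow> Cyc m x = x" for x
    using assms by (auto simp: Cyc_def)
qed

lemma cyc_prod_Nil: "cyc_prod [] = id"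
  by (simp add: cyc_prod_def)

lemma cyc_prod_Cons: "cyc_prod (m # ms) = Cyc m \<circ> cyc_prod ms"
  by (simp add: cyc_prod_def)

lemma cyc_prod_snoc: "cyc_prod (ms @ [m]) = cyc_prod ms \<circ> Cyc m"
  by (induction ms) (auto simp: cyc_prod_def)

lemma cyc_prod_permutes:
  assumes "set ms \<subseteq> {2..n}"
  shows "cyc_prod ms permutes {1..n}"
  using assms
proof (induction ms)
  case Nil
  show ?case unfolding cyc_prod_Nil by (rule permutes_id)
next
  case (Cons m ms)
  have "Cyc m permutes {1..n}"
    using Cyc_permutes[of m] Cons.prems by (auto intro: permutes_subset)
  moreover have "cyc_prod ms permutes {1..n}"
    using Cons by simp
  ultimately show ?case
    unfolding cyc_prod_Cons by (rule permutes_compose[rotated])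
qed

lemma distinct_length_le_interval:
  assumes "distinct ms" "set ms \<subseteq> {a..<b}"
  shows "length ms \<le> b - a"
proof -
  have "length ms = card (set ms)"
    using assms(1) by (simp add: distinct_card)
  also have "\<dots> \<le> card {a..<b}"
    using assms(2) by (intro card_mono) auto
  finally show ?thesis by simp
qed

lemma cyc_prod_Suc_length:
  assumes "sorted_wrt (<) ms" "set ms \<subseteq> {2..}"
  shows "cyc_prod ms (Suc (length ms)) = 1"
  using assms
proof (induction ms rule: rev_induct)
  case Nil
  then show ?case by (simp add: cyc_prod_Nil)
next
  case (snoc m ms)
  have "set ms \<subseteq> {2..<m}" "2 \<le> m" and ms: "sorted_wrt (<) ms" "set ms \<subseteq> {2..}"
    using snoc.prems by (auto simp: sorted_wrt_append)
  then have "length ms + 2 \<le> m"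
    using distinct_length_le_interval[of ms 2 m] ms(1) by (auto simp: strict_sorted_iff)
  then have "Cyc m (Suc (length (ms @ [m]))) = Suc (length ms)"
    by (simp add: Cyc_def)
  then show ?case
    using snoc.IH[OF ms] by (simp add: cyc_prod_snoc)
qed

lemma cyc_prods_permutes:
  "\<sigma> \<in> cyc_prods n j \<Longrightarrow> \<sigma> permutes {1..n}"
  using cyc_prod_permutes by (auto simp: cyc_prods_def)

lemma cyc_prods_Suc_eq_one:
  "\<sigma> \<in> cyc_prods n j \<Longrightarrow> \<sigma> (Suc j) = 1"
  using cyc_prod_Suc_length by (fastforce simp: cyc_prods_def)

lemma cyc_prods_preimage_one:
  assumes "\<sigma> \<in> cyc_prods n j" "\<sigma> k = 1"
  shows "k = Suc j"
  using cyc_prods_permutes[OF assms(1)] cyc_prods_Suc_eq_one[OF assms(1)] assms(2)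
  by (metis permutes_inj injD)

lemma cyc_prods_subset_Tset:
  assumes "1 \<le> j" "j \<le> n - 1"
  shows "cyc_prods n j \<subseteq> Tset n"
  using assms by (auto simp: Tset_def)

lemma Tset_cases:
  assumes "\<sigma> \<in> Tset n"
  obtains (id) "\<sigma> = id" | (cyc_prods) j where "1 \<le> j" "\<sigma> \<in> cyc_prods n j"
  using assms by (auto simp: Tset_def)

lemma Scoset_eq:
  assumes "i \<in> {1..n}"
  shows "Scoset n i = {\<sigma>. \<sigma> permutes {1..n} \<and> \<sigma> i = 1}"
proof (intro set_eqI iffI)
  let ?t = "Transposition.transpose 1 i"
  have t: "?t permutes {1..n}"
    using assms by (intro permutes_swap_id) auto
  fix \<sigma>
  show "\<sigma> \<in> {\<sigma>. \<sigma> permutes {1..n} \<and> \<sigma> i = 1}" if "\<sigma> \<in> Scoset n i"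
    using that t by (auto simp: Scoset_def Ssub_def intro: permutes_compose)
  show "\<sigma> \<in> Scoset n i" if "\<sigma> \<in> {\<sigma>. \<sigma> permutes {1..n} \<and> \<sigma> i = 1}"
  proof -
    have "\<sigma> = (\<sigma> \<circ> ?t) \<circ> ?t"
      by (simp add: comp_assoc)
    moreover have "\<sigma> \<circ> ?t \<in> Ssub n"
      using that t by (auto simp: Ssub_def intro: permutes_compose)
    ultimately show ?thesis
      unfolding Scoset_def by blast
  qed
qed

theorem lemma3p3:
  fixes n :: nat
  assumes "n \<ge> 2"
  shows "Tset n \<inter> Ssub n = {id} \<and>
         (\<forall>i\<in>{2..n}. Tset n \<inter> Scoset n i = cyc_prods n (i - 1))"
proof (intro conjI ballI)
  have "\<sigma> = id" if "\<sigma> \<in> Tset n" "\<sigma> \<in> Ssub n" for \<sigma>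
    using that(1)
  proof (cases rule: Tset_cases)
    case (cyc_prods j)
    with that(2) cyc_prods_preimage_one[of \<sigma> n j 1] show ?thesis
      by (auto simp: Ssub_def)
  qed
  then show "Tset n \<inter> Ssub n = {id}"
    by (auto simp: Tset_def Ssub_def permutes_id)
next
  fix i assume i: "i \<in> {2..n}"
  have "\<sigma> \<in> cyc_prods n (i - 1)" if "\<sigma> \<in> Tset n" "\<sigma> i = 1" for \<sigma>
    using that(1)
  proof (cases rule: Tset_cases)
    case id
    then show ?thesis using that(2) i by simp
  next
    case (cyc_prods j)
    then show ?thesis using cyc_prods_preimage_one[of \<sigma> n j i] that(2) by force
  qed
  moreover have "cyc_prods n (i - 1) \<subseteq> Tset n"
    using i by (intro cyc_prods_subset_Tset) auto
  ultimately show "Tset n \<inter> Scoset n i = cyc_prods n (i - 1)"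
    using i cyc_prods_permutes[of _ n "i - 1"] cyc_prods_Suc_eq_one[of _ n "i - 1"]
    by (auto simp: Scoset_eq)
qed

end
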